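(* Let $A$ be a latin square of order $n$ on symbols $\{0,\dots,n-1\}$ with $k$ pairwise disjoint transversals $T_0,\dots,T_{k-1}$, and let $C$ be a latin square of order $k$ on the symbol set $\{n,\dots,n+k-1\}$ with rows and columns indexed by $\{n,\dots,n+k-1\}$. Define $\widehat{A}_k\subseteq\{0,\dots,n+k-1\}^3$ as follows: every $(a,b,c)\in A\setminus\bigcup_{i=0}^{k-1}T_i$ belongs to $\widehat{A}_k$; for each $i$ and each $(a,b,c)\in T_i$, the triples $(a,b,n+i)$, $(a,n+i,c)$, $(n+i,b,c)$ belong to $\widehat{A}_k$; and every entry $(r,s,u)$ of $C$ belongs to $\widehat{A}_k$. Then $\widehat{A}_k$ is a latin square of order $n+k$ and $$t(\widehat{A}_k)\ \ge\ t(C)\cdot t(A;T_0,\dots,T_{k-1}).$$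
   Context: A latin square of order $m$ on a symbol set $Y$ with $|Y|=m$ is identified with a set of ordered triples $(r,c,s)$ meaning symbol $s$ is in row $r$, column $c$, such that each row and each column contains each symbol exactly once. A transversal is a set of $m$ entries containing exactly one entry from each row and each column, with no symbol repeated. $t(B)$ denotes the number of transversals of a latin square $B$, and $t(A;T_0,\dots,T_{k-1})$ denotes the number of transversals of $A$ that are disjoint from each of $T_0,\dots,T_{k-1}$. *)

theory Defs
  imports Main
begin

type_synonym triple = "nat \<times> nat \<times> nat"

definition latin_square_on :: "nat set \<Rightarrow> nat set \<Rightarrow> nat set \<Rightarrow> triple set \<Rightarrow> bool" where
  "latin_square_on R Cl Y L \<longleftrightarrow>
     finite Y \<and> card R = card Y \<and> card Cl = card Y \<and>
     L \<subseteq> R \<times> Cl \<times> Y \<and>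
     (\<forall>r\<in>R. \<forall>c\<in>Cl. \<exists>!s. (r, c, s) \<in> L) \<and>
     (\<forall>r\<in>R. \<forall>s\<in>Y. \<exists>!c. (r, c, s) \<in> L) \<and>
     (\<forall>c\<in>Cl. \<forall>s\<in>Y. \<exists>!r. (r, c, s) \<in> L)"

definition transversal :: "triple set \<Rightarrow> triple set \<Rightarrow> bool" where
  "transversal L T \<longleftrightarrow>
     T \<subseteq> L \<and>
     inj_on fst T \<and> fst ` T = fst ` L \<and>
     inj_on (\<lambda>e. fst (snd e)) T \<and> (\<lambda>e. fst (snd e)) ` T = (\<lambda>e. fst (snd e)) ` L \<and>
     inj_on (\<lambda>e. snd (snd e)) T"

definition num_transversals :: "triple set \<Rightarrow> nat" where
  "num_transversals L = card {T. transversal L T}"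

text \<open>t(A; T_0, ..., T_{k-1}): number of transversals of A disjoint from each T_i.\<close>
definition num_transversals_disj :: "triple set \<Rightarrow> nat \<Rightarrow> (nat \<Rightarrow> triple set) \<Rightarrow> nat" where
  "num_transversals_disj A k Ts =
     card {T. transversal A T \<and> (\<forall>i<k. T \<inter> Ts i = {})}"

definition Ahat :: "nat \<Rightarrow> nat \<Rightarrow> triple set \<Rightarrow> (nat \<Rightarrow> triple set) \<Rightarrow> triple set \<Rightarrow> triple set" where
  "Ahat n k A Ts C =
     (A - (\<Union>i<k. Ts i))
     \<union> (\<Union>i<k. {(a, b, n + i) | a b c. (a, b, c) \<in> Ts i})
     \<union> (\<Union>i<k. {(a, n + i, c) | a b c. (a, b, c) \<in> Ts i})
     \<union> (\<Union>i<k. {(n + i, b, c) | a b c. (a, b, c) \<in> Ts i})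
     \<union> C"

end

theory Submission
  imports Defs
begin

text \<open>
  Conjugating a latin square (permuting the three coordinates of its triples) exchanges the
  conditions on cells, on row--symbol pairs and on column--symbol pairs. The hypotheses are
  invariant under conjugation and the construction of \<open>Ahat\<close> commutes with it,
  so it suffices to show that every cell of \<open>Ahat\<close> holds exactly one symbol: a case
  distinction on whether its row and column are old (\<open>< n\<close>) or new (\<open>\<ge> n\<close>).
  For the count, a transversal \<open>S\<close> of \<open>C\<close> and a transversal \<open>T\<close> of \<open>A\<close> avoiding all
  \<open>T\<^sub>i\<close> give the transversal \<open>S \<union> T\<close> of \<open>Ahat\<close>, and \<open>S\<close>, \<open>T\<close> are recovered from
  \<open>S \<union> T\<close> because \<open>C\<close> and \<open>A\<close> are disjoint.
\<close>

lemma inj_on_Un_Pow: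
  assumes "B \<inter> C = {}"
  shows "inj_on (\<lambda>(S, T). S \<union> T) (Pow B \<times> Pow C)"
proof (rule inj_onI)
  fix p q assume p: "p \<in> Pow B \<times> Pow C" and q: "q \<in> Pow B \<times> Pow C"
    and eq: "(\<lambda>(S, T). S \<union> T) p = (\<lambda>(S, T). S \<union> T) q"
  obtain S T S' T' where pq: "p = (S, T)" "q = (S', T')" by (cases p, cases q)
  have "S = (S \<union> T) \<inter> B" "T = (S \<union> T) \<inter> C" "S' = (S' \<union> T') \<inter> B" "T' = (S' \<union> T') \<inter> C"
    using assms p q unfolding pq by auto
  with eq show "p = q"
    unfolding pq by simp
qed

lemma latin_square_on_cell_functional:
  "latin_square_on R Cl Y L \<Longrightarrow> (r, c, s) \<in> L \<Longrightarrow> (r, c, s') \<in> L \<Longrightarrow> s = s'"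
  unfolding latin_square_on_def by blast

lemma latin_square_on_subset: "latin_square_on R Cl Y L \<Longrightarrow> L \<subseteq> R \<times> Cl \<times> Y"
  by (simp add: latin_square_on_def)

lemma latin_square_on_cell_exists:
  assumes "latin_square_on R Cl Y L" "r \<in> R" "c \<in> Cl"
  obtains s where "(r, c, s) \<in> L"
proof -
  have "\<forall>r\<in>R. \<forall>c\<in>Cl. \<exists>!s. (r, c, s) \<in> L"
    using assms(1) by (simp add: latin_square_on_def)
  with assms(2,3) that show thesis by blast
qed

lemma latin_square_on_rows: "latin_square_on Q Q Q L \<Longrightarrow> fst ` L = Q"
proof (rule antisym)
  assume L: "latin_square_on Q Q Q L"
  show "fst ` L \<subseteq> Q" using latin_square_on_subset[OF L] by auto
  show "Q \<subseteq> fst ` L"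
  proof
    fix r assume "r \<in> Q"
    then obtain s where "(r, r, s) \<in> L" by (rule latin_square_on_cell_exists[OF L _ \<open>r \<in> Q\<close>])
    then show "r \<in> fst ` L" by force
  qed
qed

lemma latin_square_on_cols: "latin_square_on Q Q Q L \<Longrightarrow> (\<lambda>e. fst (snd e)) ` L = Q"
proof (rule antisym)
  assume L: "latin_square_on Q Q Q L"
  show "(\<lambda>e. fst (snd e)) ` L \<subseteq> Q" using latin_square_on_subset[OF L] by auto
  show "Q \<subseteq> (\<lambda>e. fst (snd e)) ` L"
  proof
    fix c assume "c \<in> Q"
    then obtain s where "(c, c, s) \<in> L" by (rule latin_square_on_cell_exists[OF L _ \<open>c \<in> Q\<close>])
    then show "c \<in> (\<lambda>e. fst (snd e)) ` L" by force
  qed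
qed

lemma transversal_subset: "transversal L T \<Longrightarrow> T \<subseteq> L"
  by (simp add: transversal_def)

lemma finite_transversals: "finite L \<Longrightarrow> finite {T. transversal L T}"
  by (rule finite_subset[of _ "Pow L"]) (auto dest: transversal_subset)

lemma transversal_row_exists:
  assumes "latin_square_on Q Q Q L" "transversal L T" "r \<in> Q"
  obtains c s where "(r, c, s) \<in> T"
  using assms latin_square_on_rows unfolding transversal_def by force

lemma transversal_col_exists:
  assumes "latin_square_on Q Q Q L" "transversal L T" "c \<in> Q"
  obtains r s where "(r, c, s) \<in> T"
  using assms latin_square_on_cols unfolding transversal_def by force

lemma transversal_same_row:
  "transversal L T \<Longrightarrow> (r, c, s) \<in> T \<Longrightarrow> (r, c', s') \<in> T \<Longrightarrow> c = c' \<and> s = s'"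
  unfolding transversal_def by (metis fst_conv inj_onD prod.inject)

lemma transversal_same_col:
  "transversal L T \<Longrightarrow> (r, c, s) \<in> T \<Longrightarrow> (r', c, s') \<in> T \<Longrightarrow> r = r' \<and> s = s'"
  unfolding transversal_def by (metis fst_conv snd_conv inj_onD prod.inject)

text \<open>Unlike the definition of a transversal, this form is symmetric in the three coordinates.\<close>
lemma transversal_latin_iff:
  assumes "latin_square_on Q Q Q L"
  shows "transversal L T \<longleftrightarrow>
    T \<subseteq> L \<and> inj_on fst T \<and> inj_on (\<lambda>e. fst (snd e)) T \<and> inj_on (\<lambda>e. snd (snd e)) T \<and>
    card T = card Q"
proof -
  have "finite Q"
    using assms by (simp add: latin_square_on_def)
  have cover: "f ` T = Q \<longleftrightarrow> card T = card Q"
    if "inj_on f T" "T \<subseteq> L" "f ` L = Q" for f :: "triple \<Rightarrow> nat"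
  proof -
    have "f ` T \<subseteq> Q" using that by blast
    then show ?thesis
      using card_image[OF \<open>inj_on f T\<close>] card_subset_eq[OF \<open>finite Q\<close>] by metis
  qed
  note rows = latin_square_on_rows[OF assms] and cols = latin_square_on_cols[OF assms]
  show ?thesis
    unfolding transversal_def rows cols
    using cover[of fst, OF _ _ rows] cover[of "\<lambda>e. fst (snd e)", OF _ _ cols] by blast
qed

fun swap_col_sym :: "triple \<Rightarrow> triple" where
  "swap_col_sym (r, c, s) = (r, s, c)"

fun swap_row_sym :: "triple \<Rightarrow> triple" where
  "swap_row_sym (r, c, s) = (s, c, r)"

lemma swap_col_sym_involution [simp]: "swap_col_sym (swap_col_sym x) = x"
  by (cases x) auto

lemma swap_row_sym_involution [simp]: "swap_row_sym (swap_row_sym x) = x"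
  by (cases x) auto

lemma inj_swap_col_sym: "inj swap_col_sym"
  by (metis injI swap_col_sym_involution)

lemma inj_swap_row_sym: "inj swap_row_sym"
  by (metis injI swap_row_sym_involution)

lemma mem_swap_col_sym_image [simp]: "(r, c, s) \<in> swap_col_sym ` L \<longleftrightarrow> (r, s, c) \<in> L"
  by (metis swap_col_sym.simps swap_col_sym_involution image_iff)

lemma mem_swap_row_sym_image [simp]: "(r, c, s) \<in> swap_row_sym ` L \<longleftrightarrow> (s, c, r) \<in> L"
  by (metis swap_row_sym.simps swap_row_sym_involution image_iff)

lemma latin_square_on_swap_col_sym:
  "latin_square_on Q Q Q L \<Longrightarrow> latin_square_on Q Q Q (swap_col_sym ` L)"
  unfolding latin_square_on_def by auto

lemma latin_square_on_swap_row_sym: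
  "latin_square_on Q Q Q L \<Longrightarrow> latin_square_on Q Q Q (swap_row_sym ` L)"
  unfolding latin_square_on_def by auto

definition unique_cells :: "nat set \<Rightarrow> triple set \<Rightarrow> bool" where
  "unique_cells Q L \<longleftrightarrow> (\<forall>r\<in>Q. \<forall>c\<in>Q. \<exists>!s. (r, c, s) \<in> L)"

lemma latin_square_on_iff_unique_cells:
  "latin_square_on Q Q Q L \<longleftrightarrow>
     finite Q \<and> L \<subseteq> Q \<times> Q \<times> Q \<and> unique_cells Q L \<and>
     unique_cells Q (swap_col_sym ` L) \<and> unique_cells Q (swap_row_sym ` L)"
proof -
  have "unique_cells Q (swap_row_sym ` L) \<longleftrightarrow> (\<forall>c\<in>Q. \<forall>s\<in>Q. \<exists>!r. (r, c, s) \<in> L)"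
    unfolding unique_cells_def mem_swap_row_sym_image by blast
  then show ?thesis
    unfolding latin_square_on_def unique_cells_def by auto
qed

lemma transversal_swap_col_sym:
  assumes L: "latin_square_on Q Q Q L" and T: "transversal L T"
  shows "transversal (swap_col_sym ` L) (swap_col_sym ` T)"
proof -
  have proj: "fst \<circ> swap_col_sym = fst" "(\<lambda>e. fst (snd e)) \<circ> swap_col_sym = (\<lambda>e. snd (snd e))"
    "(\<lambda>e. snd (snd e)) \<circ> swap_col_sym = (\<lambda>e. fst (snd e))"
    by (auto simp: fun_eq_iff)
  have T': "T \<subseteq> L" "inj_on fst T" "inj_on (\<lambda>e. fst (snd e)) T" "inj_on (\<lambda>e. snd (snd e)) T"
    "card T = card Q"
    using T unfolding transversal_latin_iff[OF L] by auto
  show ?thesis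
    unfolding transversal_latin_iff[OF latin_square_on_swap_col_sym[OF L]]
  proof (intro conjI inj_on_imageI)
    show "swap_col_sym ` T \<subseteq> swap_col_sym ` L" using T'(1) by (rule image_mono)
    show "card (swap_col_sym ` T) = card Q"
      using T'(5) card_image[OF inj_on_subset[OF inj_swap_col_sym]] by simp
  qed (simp_all only: proj T')
qed

lemma transversal_swap_row_sym:
  assumes L: "latin_square_on Q Q Q L" and T: "transversal L T"
  shows "transversal (swap_row_sym ` L) (swap_row_sym ` T)"
proof -
  have proj: "fst \<circ> swap_row_sym = (\<lambda>e. snd (snd e))"
    "(\<lambda>e. fst (snd e)) \<circ> swap_row_sym = (\<lambda>e. fst (snd e))" "(\<lambda>e. snd (snd e)) \<circ> swap_row_sym = fst"
    by (auto simp: fun_eq_iff)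
  have T': "T \<subseteq> L" "inj_on fst T" "inj_on (\<lambda>e. fst (snd e)) T" "inj_on (\<lambda>e. snd (snd e)) T"
    "card T = card Q"
    using T unfolding transversal_latin_iff[OF L] by auto
  show ?thesis
    unfolding transversal_latin_iff[OF latin_square_on_swap_row_sym[OF L]]
  proof (intro conjI inj_on_imageI)
    show "swap_row_sym ` T \<subseteq> swap_row_sym ` L" using T'(1) by (rule image_mono)
    show "card (swap_row_sym ` T) = card Q"
      using T'(5) card_image[OF inj_on_subset[OF inj_swap_row_sym]] by simp
  qed (simp_all only: proj T')
qed

lemma mem_Ahat:
  "(x, y, z) \<in> Ahat n k A Ts C \<longleftrightarrow>
     ((x, y, z) \<in> A \<and> (\<forall>i<k. (x, y, z) \<notin> Ts i))
     \<or> (\<exists>i<k. z = n + i \<and> (\<exists>c. (x, y, c) \<in> Ts i))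
     \<or> (\<exists>i<k. y = n + i \<and> (\<exists>b. (x, b, z) \<in> Ts i))
     \<or> (\<exists>i<k. x = n + i \<and> (\<exists>a. (a, y, z) \<in> Ts i))
     \<or> (x, y, z) \<in> C"
  unfolding Ahat_def by auto

lemma swap_col_sym_Ahat:
  "swap_col_sym ` Ahat n k A Ts C =
     Ahat n k (swap_col_sym ` A) (\<lambda>i. swap_col_sym ` Ts i) (swap_col_sym ` C)"
proof (rule set_eqI, clarify)
  fix x y z
  show "(x, y, z) \<in> swap_col_sym ` Ahat n k A Ts C \<longleftrightarrow>
    (x, y, z) \<in> Ahat n k (swap_col_sym ` A) (\<lambda>i. swap_col_sym ` Ts i) (swap_col_sym ` C)"
    unfolding mem_swap_col_sym_image mem_Ahat by blast
qed

lemma swap_row_sym_Ahat: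
  "swap_row_sym ` Ahat n k A Ts C =
     Ahat n k (swap_row_sym ` A) (\<lambda>i. swap_row_sym ` Ts i) (swap_row_sym ` C)"
proof (rule set_eqI, clarify)
  fix x y z
  show "(x, y, z) \<in> swap_row_sym ` Ahat n k A Ts C \<longleftrightarrow>
    (x, y, z) \<in> Ahat n k (swap_row_sym ` A) (\<lambda>i. swap_row_sym ` Ts i) (swap_row_sym ` C)"
    unfolding mem_swap_row_sym_image mem_Ahat by blast
qed

locale prolongation_setting =
  fixes n k :: nat and A C :: "triple set" and Ts :: "nat \<Rightarrow> triple set"
  assumes A_latin: "latin_square_on {0..<n} {0..<n} {0..<n} A"
    and Ts_transversal: "\<And>i. i < k \<Longrightarrow> transversal A (Ts i)"
    and Ts_disjoint: "\<And>i j. i < k \<Longrightarrow> j < k \<Longrightarrow> i \<noteq> j \<Longrightarrow> Ts i \<inter> Ts j = {}"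
    and C_latin: "latin_square_on {n..<n+k} {n..<n+k} {n..<n+k} C"
begin

lemma prolongation_setting_swap_col_sym:
  "prolongation_setting n k (swap_col_sym ` A) (swap_col_sym ` C) (\<lambda>i. swap_col_sym ` Ts i)"
proof
  show "latin_square_on {0..<n} {0..<n} {0..<n} (swap_col_sym ` A)"
    using A_latin by (rule latin_square_on_swap_col_sym)
  show "latin_square_on {n..<n+k} {n..<n+k} {n..<n+k} (swap_col_sym ` C)"
    using C_latin by (rule latin_square_on_swap_col_sym)
  show "transversal (swap_col_sym ` A) (swap_col_sym ` Ts i)" if "i < k" for i
    using A_latin Ts_transversal[OF that] by (rule transversal_swap_col_sym)
  show "swap_col_sym ` Ts i \<inter> swap_col_sym ` Ts j = {}" if "i < k" "j < k" "i \<noteq> j" for i j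
    using Ts_disjoint[OF that] by (simp add: image_Int[OF inj_swap_col_sym, symmetric])
qed

lemma prolongation_setting_swap_row_sym:
  "prolongation_setting n k (swap_row_sym ` A) (swap_row_sym ` C) (\<lambda>i. swap_row_sym ` Ts i)"
proof
  show "latin_square_on {0..<n} {0..<n} {0..<n} (swap_row_sym ` A)"
    using A_latin by (rule latin_square_on_swap_row_sym)
  show "latin_square_on {n..<n+k} {n..<n+k} {n..<n+k} (swap_row_sym ` C)"
    using C_latin by (rule latin_square_on_swap_row_sym)
  show "transversal (swap_row_sym ` A) (swap_row_sym ` Ts i)" if "i < k" for i
    using A_latin Ts_transversal[OF that] by (rule transversal_swap_row_sym)
  show "swap_row_sym ` Ts i \<inter> swap_row_sym ` Ts j = {}" if "i < k" "j < k" "i \<noteq> j" for i j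
    using Ts_disjoint[OF that] by (simp add: image_Int[OF inj_swap_row_sym, symmetric])
qed

lemma A_entry: "(x, y, z) \<in> A \<Longrightarrow> x < n \<and> y < n \<and> z < n"
  using latin_square_on_subset[OF A_latin] by auto

lemma C_entry: "(x, y, z) \<in> C \<Longrightarrow> n \<le> x \<and> x < n + k \<and> n \<le> y \<and> y < n + k \<and> n \<le> z \<and> z < n + k"
  using latin_square_on_subset[OF C_latin] by auto

lemma Ts_subset: "i < k \<Longrightarrow> Ts i \<subseteq> A"
  using Ts_transversal transversal_subset by blast

lemma Ts_entry: "i < k \<Longrightarrow> (x, y, z) \<in> Ts i \<Longrightarrow> x < n \<and> y < n \<and> z < n"
  using A_entry Ts_subset by blast

lemma finite_A: "finite A"
  using latin_square_on_subset[OF A_latin] by (rule finite_subset) simp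

lemma finite_C: "finite C"
  using latin_square_on_subset[OF C_latin] by (rule finite_subset) simp

lemma C_disjoint_A: "C \<inter> A = {}"
  using A_entry C_entry by fastforce

lemma mem_Ahat_old_cell:
  assumes "r < n" "c < n"
  shows "(r, c, s) \<in> Ahat n k A Ts C \<longleftrightarrow>
    (r, c, s) \<in> A \<and> (\<forall>i<k. (r, c, s) \<notin> Ts i) \<or> (\<exists>i<k. s = n + i \<and> (\<exists>z. (r, c, z) \<in> Ts i))"
  using assms unfolding mem_Ahat by (auto dest: C_entry)

lemma mem_Ahat_new_col:
  assumes "r < n" "i < k"
  shows "(r, n + i, s) \<in> Ahat n k A Ts C \<longleftrightarrow> (\<exists>b. (r, b, s) \<in> Ts i)"
  using assms unfolding mem_Ahat by (auto dest: A_entry C_entry Ts_entry)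

lemma mem_Ahat_new_row:
  assumes "c < n" "i < k"
  shows "(n + i, c, s) \<in> Ahat n k A Ts C \<longleftrightarrow> (\<exists>a. (a, c, s) \<in> Ts i)"
  using assms unfolding mem_Ahat by (auto dest: A_entry C_entry Ts_entry)

lemma mem_Ahat_new_cell:
  assumes "n \<le> r" "n \<le> c"
  shows "(r, c, s) \<in> Ahat n k A Ts C \<longleftrightarrow> (r, c, s) \<in> C"
  using assms unfolding mem_Ahat by (auto dest: A_entry Ts_entry)

lemma Ahat_unique_cells: "unique_cells {0..<n+k} (Ahat n k A Ts C)"
  unfolding unique_cells_def
proof (intro ballI)
  fix r c assume "r \<in> {0..<n+k}" "c \<in> {0..<n+k}"
  then consider (old) "r < n" "c < n"
    | (new_col) i where "r < n" "i < k" "c = n + i"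
    | (new_row) i where "c < n" "i < k" "r = n + i"
    | (new) "n \<le> r" "n \<le> c"
    by (metis atLeastLessThan_iff le_add_diff_inverse nat_add_left_cancel_less not_less)
  then show "\<exists>!s. (r, c, s) \<in> Ahat n k A Ts C"
  proof cases
    case old
    obtain a where a: "(r, c, a) \<in> A"
      by (rule latin_square_on_cell_exists[OF A_latin, of r c]) (use old in auto)
    have same: "(r, c, z) \<in> Ts i \<Longrightarrow> i < k \<Longrightarrow> z = a" for i z
      using latin_square_on_cell_functional[OF A_latin] Ts_subset a by blast
    show ?thesis
    proof (cases "\<exists>i<k. (r, c, a) \<in> Ts i")
      case True
      then obtain i where i: "i < k" "(r, c, a) \<in> Ts i" by blast
      have "j = i" if "j < k" "(r, c, z) \<in> Ts j" for j z
        using Ts_disjoint[OF i(1) that(1)] i(2) that same by blast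
      then have "(r, c, s) \<in> Ahat n k A Ts C \<longleftrightarrow> s = n + i" for s
        unfolding mem_Ahat_old_cell[OF old]
        using i latin_square_on_cell_functional[OF A_latin a] by blast
      then show ?thesis by simp
    next
      case False
      have "(r, c, s) \<in> Ahat n k A Ts C \<longleftrightarrow> s = a" for s
        unfolding mem_Ahat_old_cell[OF old]
        using False a same latin_square_on_cell_functional[OF A_latin a] by blast
      then show ?thesis by simp
    qed
  next
    case new_col
    obtain b z where bz: "(r, b, z) \<in> Ts i"
      by (rule transversal_row_exists[OF A_latin Ts_transversal[OF new_col(2)], of r]) (use new_col in auto)
    have "(r, c, s) \<in> Ahat n k A Ts C \<longleftrightarrow> s = z" for s
      unfolding new_col(3) mem_Ahat_new_col[OF new_col(1,2)]
      using bz transversal_same_row[OF Ts_transversal[OF new_col(2)]] by blast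
    then show ?thesis by simp
  next
    case new_row
    obtain a z where az: "(a, c, z) \<in> Ts i"
      by (rule transversal_col_exists[OF A_latin Ts_transversal[OF new_row(2)], of c]) (use new_row in auto)
    have "(r, c, s) \<in> Ahat n k A Ts C \<longleftrightarrow> s = z" for s
      unfolding new_row(3) mem_Ahat_new_row[OF new_row(1,2)]
      using az transversal_same_col[OF Ts_transversal[OF new_row(2)]] by blast
    then show ?thesis by simp
  next
    case new
    then show ?thesis
      unfolding mem_Ahat_new_cell[OF new]
      using C_latin \<open>r \<in> {0..<n+k}\<close> \<open>c \<in> {0..<n+k}\<close> unfolding latin_square_on_def by simp
  qed
qed

lemma Ahat_subset: "Ahat n k A Ts C \<subseteq> {0..<n+k} \<times> {0..<n+k} \<times> {0..<n+k}"
proof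
  fix e assume e: "e \<in> Ahat n k A Ts C"
  obtain x y z where xyz: "e = (x, y, z)" by (cases e)
  from e show "e \<in> {0..<n+k} \<times> {0..<n+k} \<times> {0..<n+k}"
    unfolding xyz mem_Ahat by (auto dest: A_entry C_entry Ts_entry)
qed

lemma Ahat_latin: "latin_square_on {0..<n+k} {0..<n+k} {0..<n+k} (Ahat n k A Ts C)"
  unfolding latin_square_on_iff_unique_cells swap_col_sym_Ahat swap_row_sym_Ahat
  using Ahat_subset Ahat_unique_cells
    prolongation_setting.Ahat_unique_cells[OF prolongation_setting_swap_col_sym]
    prolongation_setting.Ahat_unique_cells[OF prolongation_setting_swap_row_sym]
  by simp

lemma transversal_Ahat_Un:
  assumes S: "transversal C S" and T: "transversal A T" and avoids: "\<forall>i<k. T \<inter> Ts i = {}"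
  shows "transversal (Ahat n k A Ts C) (S \<union> T)"
proof -
  have S': "S \<subseteq> C" "inj_on fst S" "inj_on (\<lambda>e. fst (snd e)) S" "inj_on (\<lambda>e. snd (snd e)) S"
    "card S = k"
    using S unfolding transversal_latin_iff[OF C_latin] by auto
  have T': "T \<subseteq> A" "inj_on fst T" "inj_on (\<lambda>e. fst (snd e)) T" "inj_on (\<lambda>e. snd (snd e)) T"
    "card T = n"
    using T unfolding transversal_latin_iff[OF A_latin] by auto
  have "T \<subseteq> A - (\<Union>i<k. Ts i)"
    using T'(1) avoids by blast
  then have "S \<union> T \<subseteq> Ahat n k A Ts C"
    using S'(1) unfolding Ahat_def by auto
  moreover have "f ` S \<inter> f ` T = {}"
    if "f = fst \<or> f = (\<lambda>e. fst (snd e)) \<or> f = (\<lambda>e. snd (snd e))" for f :: "triple \<Rightarrow> nat"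
    using that S'(1) T'(1) by (fastforce dest: A_entry C_entry)
  moreover have "finite S" "finite T" "S \<inter> T = {}"
    using S'(1) T'(1) finite_A finite_C C_disjoint_A by (auto intro: finite_subset)
  ultimately show ?thesis
    unfolding transversal_latin_iff[OF Ahat_latin] inj_on_Un
    using S' T' by (auto simp: card_Un_disjoint)
qed

lemma card_transversals_Ahat:
  "num_transversals C * num_transversals_disj A k Ts \<le> num_transversals (Ahat n k A Ts C)"
proof -
  let ?X = "{S. transversal C S}" and ?Y = "{T. transversal A T \<and> (\<forall>i<k. T \<inter> Ts i = {})}"
    and ?Z = "{U. transversal (Ahat n k A Ts C) U}" and ?union = "\<lambda>(S, T). S \<union> T"
  have "?X \<times> ?Y \<subseteq> Pow C \<times> Pow A"
    by (auto dest: transversal_subset)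
  with inj_on_Un_Pow[OF C_disjoint_A] have inj: "inj_on ?union (?X \<times> ?Y)"
    by (rule inj_on_subset)
  have "?union ` (?X \<times> ?Y) \<subseteq> ?Z"
  proof (rule image_subsetI)
    fix p assume "p \<in> ?X \<times> ?Y"
    then obtain S T where p: "p = (S, T)"
      and S: "transversal C S" and T: "transversal A T" and avoids: "\<forall>i<k. T \<inter> Ts i = {}"
      by blast
    from S T avoids have "transversal (Ahat n k A Ts C) (S \<union> T)"
      by (rule transversal_Ahat_Un)
    then show "?union p \<in> ?Z"
      unfolding p by simp
  qed
  moreover have "finite ?Z"
    by (rule finite_transversals, rule finite_subset[OF Ahat_subset]) simp
  ultimately have image_le: "card (?union ` (?X \<times> ?Y)) \<le> card ?Z"
    by (intro card_mono)
  have "num_transversals C * num_transversals_disj A k Ts = card (?X \<times> ?Y)"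
    unfolding num_transversals_def num_transversals_disj_def by (rule card_cartesian_product[symmetric])
  also have "\<dots> = card (?union ` (?X \<times> ?Y))"
    using inj by (rule card_image[symmetric])
  also have "\<dots> \<le> card ?Z"
    by (rule image_le)
  finally show ?thesis
    unfolding num_transversals_def .
qed

end

theorem mainTheorem4:
  fixes n k :: nat and A C :: "triple set" and Ts :: "nat \<Rightarrow> triple set"
  assumes A: "latin_square_on {0..<n} {0..<n} {0..<n} A"
    and T: "\<forall>i<k. transversal A (Ts i)"
    and disj: "\<forall>i<k. \<forall>j<k. i \<noteq> j \<longrightarrow> Ts i \<inter> Ts j = {}"
    and C: "latin_square_on {n..<n+k} {n..<n+k} {n..<n+k} C"
  shows "latin_square_on {0..<n+k} {0..<n+k} {0..<n+k} (Ahat n k A Ts C)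
         \<and> num_transversals (Ahat n k A Ts C)
             \<ge> num_transversals C * num_transversals_disj A k Ts"
proof -
  interpret prolongation_setting n k A C Ts
    using A T disj C by unfold_locales blast+
  show ?thesis
    using Ahat_latin card_transversals_Ahat by simp
qed

end
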